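(* Let $\Omega$ be a domain in $\mathbb{R}^n$ ($n\geq 2$), let $u$ be an upper semicontinuous function on $\Omega$, let $v$ be a subharmonic function in $\Omega$, and let $K$ be a Borel subset of $\Omega$. Let $h:(0,+\infty)\to(0,+\infty)$ be a function such that there are real numbers $M>0$ and $c>4$ satisfying $$\int_0^{c\epsilon}\frac{h(r)}{r^{n-1}}\,dr\leq M\frac{h(\epsilon)}{\epsilon^{n-2}}$$ for all sufficiently small $\epsilon>0$. Suppose that there exist a positive Borel measure $\mu$, real numbers $A,B>0$, $\epsilon_0>0$, and a set $N\subset K$ such that: 1. $\mu(N)=0$; 2. $A\,h(\epsilon)\leq\mu\big(K\cap\mathbb{B}(x,\epsilon)\big)\leq B\,h(\epsilon)$ for all $x\in K$ and all $\epsilon<\epsilon_0$; 3. $u\geq v$ on $K\setminus N$. Then $u\geq v$ on $K$.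
   Context: $\mathbb{B}(x,r)$ denotes the open ball in $\mathbb{R}^n$ with center $x$ and radius $r$. A function $v:\Omega\to[-\infty,+\infty)$ is subharmonic if it is upper semicontinuous, not identically $-\infty$, and for every relatively compact open $G\subset\Omega$ and every $\varphi$ harmonic on $G$ and continuous on $\bar G$, $v\leq\varphi$ on $\partial G$ implies $v\leq\varphi$ on $G$. *)

theory Defs
  imports "HOL-Analysis.Analysis"
begin

definition usc_on :: "'a::topological_space set \<Rightarrow> ('a \<Rightarrow> ereal) \<Rightarrow> bool" where
  "usc_on S u \<longleftrightarrow> (\<forall>x\<in>S. \<forall>c. u x < c \<longrightarrow> (\<forall>\<^sub>F y in at x within S. u y < c))"

definition harmonic_on :: "'a::euclidean_space set \<Rightarrow> ('a \<Rightarrow> real) \<Rightarrow> bool" where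
  "harmonic_on G \<phi> \<longleftrightarrow> open G \<and>
     (\<exists>D :: 'a \<Rightarrow> ('a \<Rightarrow>\<^sub>L real). \<exists>D2 :: 'a \<Rightarrow> ('a \<Rightarrow>\<^sub>L ('a \<Rightarrow>\<^sub>L real)).
        (\<forall>x\<in>G. (\<phi> has_derivative blinfun_apply (D x)) (at x)) \<and>
        (\<forall>x\<in>G. (D has_derivative blinfun_apply (D2 x)) (at x)) \<and>
        continuous_on G D2 \<and>
        (\<forall>x\<in>G. (\<Sum>i\<in>Basis. blinfun_apply (blinfun_apply (D2 x) i) i) = 0))"

definition subharmonic_on :: "'a::euclidean_space set \<Rightarrow> ('a \<Rightarrow> ereal) \<Rightarrow> bool" where
  "subharmonic_on \<Omega> v \<longleftrightarrow>
     usc_on \<Omega> v \<and> (\<forall>x\<in>\<Omega>. v x \<noteq> \<infinity>) \<and> (\<exists>x\<in>\<Omega>. v x \<noteq> -\<infinity>) \<and>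
     (\<forall>G \<phi>. open G \<and> compact (closure G) \<and> closure G \<subseteq> \<Omega> \<and>
            harmonic_on G \<phi> \<and> continuous_on (closure G) \<phi> \<and>
            (\<forall>x\<in>frontier G. v x \<le> ereal (\<phi> x))
            \<longrightarrow> (\<forall>x\<in>G. v x \<le> ereal (\<phi> x)))"

end

theory Submission
  imports Defs
begin

text \<open>Suppose \<open>u x0 < a < v x0\<close> at some \<open>x0 \<in> K\<close>. By upper semicontinuity \<open>v < a\<close> on \<open>K - N\<close>
  near \<open>x0\<close>, and \<open>v < L\<close> near \<open>x0\<close> for any \<open>L > v x0\<close>. Cut the part of \<open>K - N\<close> in
  \<open>B(x0, s)\<close>, of measure at least \<open>A h(s)\<close>, into small pieces \<open>D i\<close> around points \<open>z i\<close> and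
  let \<open>P\<close> be the Newtonian potential of the point masses \<open>\<mu>(D i)\<close> at the \<open>z i\<close>. The lower
  growth bound makes \<open>P x0\<close> exceed its values on the sphere of radius \<open>3 s\<close> by a multiple of
  \<open>h(s) / s^(n-2)\<close>, while the upper growth bound together with the integral condition on \<open>h\<close>
  bounds \<open>P\<close> by a multiple \<open>T\<close> of the same quantity near the pieces. With \<open>\<beta>\<close> a bound for
  \<open>P\<close> on the outer sphere, comparing \<open>v\<close> with the harmonic barrier \<open>L - (L - a) (P - \<beta>) / T\<close>
  on the ball with small holes around the \<open>z i\<close> gives \<open>v x0 \<le> L - \<theta> (L - a)\<close> with \<open>\<theta> > 0\<close> independent of \<open>s\<close>, \<open>L\<close> and \<open>a\<close>; letting \<open>L\<close>
  tend to \<open>v x0\<close> contradicts \<open>a < v x0\<close>.\<close>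

section \<open>Harmonic functions\<close>

lemma harmonic_on_radial:
  fixes z :: "'a::euclidean_space" and F F1 F2 :: "real \<Rightarrow> real"
  assumes F: "\<And>t. t > 0 \<Longrightarrow> (F has_real_derivative F1 t) (at t)"
    and F1: "\<And>t. t > 0 \<Longrightarrow> (F1 has_real_derivative F2 t) (at t)"
    and F2_cont: "continuous_on {0<..} F2"
    and ode: "\<And>t. t > 0 \<Longrightarrow> 2 * t * F2 t + DIM('a) * F1 t = 0"
  shows "harmonic_on (-{z}) (\<lambda>y. F ((y - z) \<bullet> (y - z)))"
proof -
  define q where "q y = (y - z) \<bullet> (y - z)" for y
  have q_pos: "q y > 0" if "y \<in> -{z}" for y
    using that by (simp add: q_def)
  have dq: "(q has_derivative (\<lambda>h. (y - z) \<bullet> h + h \<bullet> (y - z))) (at y)" for y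
    unfolding q_def by (auto intro!: derivative_eq_intros)
  have F1_cont: "continuous_on {0<..} F1"
    using F1 by (meson DERIV_isCont continuous_at_imp_continuous_on greaterThan_iff)
  define J :: "'a \<Rightarrow>\<^sub>L ('a \<Rightarrow>\<^sub>L real)" where "J = Blinfun blinfun_inner_left"
  have J: "blinfun_apply J h = blinfun_inner_left h" for h
    unfolding J_def by (simp add: bounded_linear_Blinfun_apply bounded_linear_blinfun_inner_left)
  define Ou :: "'a \<Rightarrow> 'a \<Rightarrow>\<^sub>L ('a \<Rightarrow>\<^sub>L real)" where
    "Ou w = blinfun_scaleR_left (blinfun_inner_left w) o\<^sub>L blinfun_inner_left w" for w
  define D where "D y = (2 * F1 (q y)) *\<^sub>R blinfun_inner_left (y - z)" for y
  define D2 where "D2 y = (4 * F2 (q y)) *\<^sub>R Ou (y - z) + (2 * F1 (q y)) *\<^sub>R J" for y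
  show ?thesis unfolding harmonic_on_def
  proof (intro conjI exI[of _ D] exI[of _ D2] ballI)
    show "open (- {z} :: 'a set)" by auto
  next
    fix y :: 'a assume y: "y \<in> -{z}"
    have "((\<lambda>y. F (q y)) has_derivative (\<lambda>h. F1 (q y) * ((y - z) \<bullet> h + h \<bullet> (y - z)))) (at y)"
      using has_derivative_compose[OF dq F[OF q_pos[OF y], unfolded has_field_derivative_def]]
      by (simp add: o_def mult.commute)
    then show "((\<lambda>y. F ((y - z) \<bullet> (y - z))) has_derivative blinfun_apply (D y)) (at y)"
      unfolding q_def by (rule has_derivative_eq_rhs)
        (auto simp: D_def q_def blinfun.scaleR_left inner_diff_right inner_commute algebra_simps)
  next
    fix y :: 'a assume y: "y \<in> -{z}"
    have d1: "((\<lambda>y. 2 * F1 (q y)) has_derivative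
        (\<lambda>h. 2 * (F2 (q y) * ((y - z) \<bullet> h + h \<bullet> (y - z))))) (at y)"
      using has_derivative_compose[OF dq F1[OF q_pos[OF y], unfolded has_field_derivative_def]]
      by (auto intro!: derivative_eq_intros simp: o_def mult.commute)
    have d2: "((\<lambda>y. blinfun_inner_left (y - z)) has_derivative (\<lambda>h. blinfun_inner_left h)) (at y)"
      by (rule bounded_linear.has_derivative[OF bounded_linear_blinfun_inner_left])
        (auto intro!: derivative_eq_intros)
    show "(D has_derivative blinfun_apply (D2 y)) (at y)"
      unfolding D_def
      apply (rule has_derivative_eq_rhs[OF has_derivative_scaleR[OF d1 d2]])
      apply (rule ext, rule blinfun_eqI)
      by (simp add: D2_def Ou_def J blinfun.scaleR_left blinfun.add_left inner_diff_left
          inner_commute algebra_simps)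
  next
    show "continuous_on (- {z}) D2"
      unfolding D2_def Ou_def
      apply (intro continuous_intros continuous_on_compose2[OF F2_cont]
          continuous_on_compose2[OF F1_cont])
      by (auto simp: q_def intro!: continuous_intros)
  next
    fix y :: 'a assume y: "y \<in> -{z}"
    have entry: "blinfun_apply (blinfun_apply (D2 y) i) i
        = 4 * F2 (q y) * (((y - z) \<bullet> i) * ((y - z) \<bullet> i)) + 2 * F1 (q y) * (i \<bullet> i)" for i
      by (simp add: D2_def Ou_def J blinfun.scaleR_left blinfun.add_left inner_commute)
    have "(\<Sum>i\<in>Basis. blinfun_apply (blinfun_apply (D2 y) i) i)
        = 4 * F2 (q y) * (\<Sum>i\<in>Basis. ((y - z) \<bullet> i) * ((y - z) \<bullet> i))
          + 2 * F1 (q y) * (\<Sum>i\<in>(Basis::'a set). i \<bullet> i)"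
      by (simp add: entry sum.distrib sum_distrib_left)
    also have "\<dots> = 4 * F2 (q y) * q y + 2 * F1 (q y) * DIM('a)"
      by (simp add: q_def euclidean_inner[symmetric])
    also have "\<dots> = 2 * (2 * q y * F2 (q y) + DIM('a) * F1 (q y))"
      by (simp add: algebra_simps)
    also have "\<dots> = 0"
      using ode[OF q_pos[OF y]] by simp
    finally show "(\<Sum>i\<in>Basis. blinfun_apply (blinfun_apply (D2 y) i) i) = 0" .
  qed
qed

lemma harmonic_on_cong:
  assumes "harmonic_on G f" "\<And>x. x \<in> G \<Longrightarrow> f x = g x"
  shows "harmonic_on G g"
proof -
  from assms(1) obtain D D2 where G: "open G"
    and d: "\<forall>x\<in>G. (f has_derivative blinfun_apply (D x)) (at x)"
    and rest: "(\<forall>x\<in>G. (D has_derivative blinfun_apply (D2 x)) (at x)) \<and> continuous_on G D2 \<and>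
        (\<forall>x\<in>G. (\<Sum>i\<in>Basis. blinfun_apply (blinfun_apply (D2 x) i) i) = 0)"
    unfolding harmonic_on_def by blast
  have "\<forall>x\<in>G. (g has_derivative blinfun_apply (D x)) (at x)"
    using d G assms(2) by (metis has_derivative_transform_within_open)
  then show ?thesis
    unfolding harmonic_on_def using G rest by blast
qed

lemma harmonic_on_subset:
  assumes "harmonic_on G f" "open H" "H \<subseteq> G"
  shows "harmonic_on H f"
proof -
  from assms(1) obtain D D2 where
    "\<forall>x\<in>G. (f has_derivative blinfun_apply (D x)) (at x)"
    "\<forall>x\<in>G. (D has_derivative blinfun_apply (D2 x)) (at x)" "continuous_on G D2"
    "\<forall>x\<in>G. (\<Sum>i\<in>Basis. blinfun_apply (blinfun_apply (D2 x) i) i) = 0"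
    unfolding harmonic_on_def by blast
  with assms(2,3) show ?thesis
    unfolding harmonic_on_def by (blast intro: continuous_on_subset)
qed

lemma harmonic_on_continuous: "harmonic_on G f \<Longrightarrow> continuous_on G f"
  unfolding harmonic_on_def
  by (metis continuous_at_imp_continuous_on has_derivative_continuous)

lemma harmonic_on_const: "open G \<Longrightarrow> harmonic_on G (\<lambda>x. c)"
  unfolding harmonic_on_def
  by (intro conjI exI[of _ "\<lambda>x. 0"]) (auto intro!: derivative_eq_intros)

lemma harmonic_on_lincomb:
  assumes "harmonic_on G f" "harmonic_on G g"
  shows "harmonic_on G (\<lambda>x. a * f x + b * g x)"
proof -
  from assms(1) obtain D D2 where G: "open G"
    and d: "\<forall>x\<in>G. (f has_derivative blinfun_apply (D x)) (at x)"
    and d2: "\<forall>x\<in>G. (D has_derivative blinfun_apply (D2 x)) (at x)"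
    and c: "continuous_on G D2"
    and tr: "\<forall>x\<in>G. (\<Sum>i\<in>Basis. blinfun_apply (blinfun_apply (D2 x) i) i) = 0"
    unfolding harmonic_on_def by blast
  from assms(2) obtain E E2 where
    e: "\<forall>x\<in>G. (g has_derivative blinfun_apply (E x)) (at x)"
    and e2: "\<forall>x\<in>G. (E has_derivative blinfun_apply (E2 x)) (at x)"
    and ce: "continuous_on G E2"
    and tre: "\<forall>x\<in>G. (\<Sum>i\<in>Basis. blinfun_apply (blinfun_apply (E2 x) i) i) = 0"
    unfolding harmonic_on_def by blast
  show ?thesis unfolding harmonic_on_def
  proof (intro conjI exI[of _ "\<lambda>x. a *\<^sub>R D x + b *\<^sub>R E x"]
      exI[of _ "\<lambda>x. a *\<^sub>R D2 x + b *\<^sub>R E2 x"] ballI)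
    show "open G" by fact
  next
    fix x assume x: "x \<in> G"
    show "((\<lambda>x. a * f x + b * g x) has_derivative blinfun_apply (a *\<^sub>R D x + b *\<^sub>R E x)) (at x)"
      using d e x by (auto intro!: derivative_eq_intros simp: blinfun.add_left blinfun.scaleR_left)
    show "((\<lambda>x. a *\<^sub>R D x + b *\<^sub>R E x) has_derivative blinfun_apply (a *\<^sub>R D2 x + b *\<^sub>R E2 x)) (at x)"
      using d2 e2 x by (auto intro!: derivative_eq_intros simp: blinfun.add_left blinfun.scaleR_left)
    show "(\<Sum>i\<in>Basis. blinfun_apply (blinfun_apply (a *\<^sub>R D2 x + b *\<^sub>R E2 x) i) i) = 0"
      using tr tre x
      by (simp add: blinfun.add_left blinfun.scaleR_left sum.distrib sum_distrib_left[symmetric])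
  next
    show "continuous_on G (\<lambda>x. a *\<^sub>R D2 x + b *\<^sub>R E2 x)"
      using c ce by (intro continuous_intros)
  qed
qed

lemma harmonic_on_sum:
  assumes "finite I" "open G" "\<And>i. i \<in> I \<Longrightarrow> harmonic_on G (f i)"
  shows "harmonic_on G (\<lambda>x. \<Sum>i\<in>I. f i x)"
  using assms
proof (induction I rule: finite_induct)
  case empty
  then show ?case using harmonic_on_const[of G 0] by simp
next
  case (insert j I)
  have "harmonic_on G (\<lambda>x. 1 * f j x + 1 * (\<Sum>i\<in>I. f i x))"
    by (rule harmonic_on_lincomb) (use insert in auto)
  then show ?case using insert by simp
qed

section \<open>The radial fundamental solution\<close>

text \<open>The fundamental solution of the Laplacian in dimension \<open>n\<close>, normalised to vanish at
  radius \<open>R\<close>; it is the integral of \<open>r^(1-n)\<close> over \<open>[d, R]\<close>.\<close>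
definition newtonian_kernel :: "nat \<Rightarrow> real \<Rightarrow> real \<Rightarrow> real" where
  "newtonian_kernel n R d =
     (if n = 2 then ln R - ln d else (1 / d^(n-2) - 1 / R^(n-2)) / (real n - 2))"

lemma harmonic_newtonian_kernel:
  assumes n: "DIM('a::euclidean_space) \<ge> 2"
  shows "harmonic_on (-{z}) (\<lambda>y::'a. newtonian_kernel DIM('a) R (norm (y - z)))"
proof (cases "DIM('a) = 2")
  case True
  have "harmonic_on (-{z}) (\<lambda>y::'a. ln ((y - z) \<bullet> (y - z)))"
    by (rule harmonic_on_radial[where ?F1.0="\<lambda>t. 1/t" and ?F2.0="\<lambda>t. -1/t^2"])
      (auto intro!: derivative_eq_intros continuous_intros simp: True power2_eq_square field_simps)
  then have "harmonic_on (-{z}) (\<lambda>y::'a. (-1/2) * ln ((y - z) \<bullet> (y - z)) + 1 * ln R)"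
    by (rule harmonic_on_lincomb[OF _ harmonic_on_const]) auto
  then show ?thesis
  proof (rule harmonic_on_cong)
    fix y :: 'a assume "y \<in> -{z}"
    then have "norm (y - z) = sqrt ((y - z) \<bullet> (y - z))" "(y - z) \<bullet> (y - z) > 0"
      by (auto simp: norm_eq_sqrt_inner)
    then show "(-1/2) * ln ((y - z) \<bullet> (y - z)) + 1 * ln R = newtonian_kernel DIM('a) R (norm (y - z))"
      by (simp add: newtonian_kernel_def True ln_sqrt)
  qed
next
  case False
  define n where "n = DIM('a)"
  with False n have n3: "n \<ge> 3" by simp
  define \<alpha> where "\<alpha> = - (real n - 2) / 2"
  have "harmonic_on (-{z}) (\<lambda>y::'a. ((y - z) \<bullet> (y - z)) powr \<alpha>)"
  proof (rule harmonic_on_radial[where ?F1.0="\<lambda>t. \<alpha> * t powr (\<alpha> - 1)"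
        and ?F2.0="\<lambda>t. \<alpha> * ((\<alpha> - 1) * t powr (\<alpha> - 1 - 1))"])
    fix t :: real assume t: "t > 0"
    show "((\<lambda>t. t powr \<alpha>) has_real_derivative \<alpha> * t powr (\<alpha> - 1)) (at t)"
      using t by (auto intro!: derivative_eq_intros)
    show "((\<lambda>t. \<alpha> * t powr (\<alpha> - 1)) has_real_derivative \<alpha> * ((\<alpha> - 1) * t powr (\<alpha> - 1 - 1))) (at t)"
      using t by (auto intro!: derivative_eq_intros)
    have "t * t powr (\<alpha> - 1 - 1) = t powr (\<alpha> - 1)"
      using t by (simp add: powr_diff power2_eq_square)
    moreover have "2 * t * (\<alpha> * ((\<alpha> - 1) * t powr (\<alpha> - 1 - 1)))
        = 2 * \<alpha> * (\<alpha> - 1) * (t * t powr (\<alpha> - 1 - 1))"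
      by (simp add: algebra_simps)
    moreover have "(2 * \<alpha> * (\<alpha> - 1) + real n * \<alpha>) * t powr (\<alpha> - 1) = 0"
      unfolding \<alpha>_def by (simp add: field_simps)
    ultimately show "2 * t * (\<alpha> * ((\<alpha> - 1) * t powr (\<alpha> - 1 - 1)))
        + real DIM('a) * (\<alpha> * t powr (\<alpha> - 1)) = 0"
      unfolding n_def by (simp add: algebra_simps)
  next
    show "continuous_on {0<..} (\<lambda>t. \<alpha> * ((\<alpha> - 1) * t powr (\<alpha> - 1 - 1)))"
      by (intro continuous_intros) auto
  qed
  then have "harmonic_on (-{z}) (\<lambda>y::'a. (1 / (real n - 2)) * ((y - z) \<bullet> (y - z)) powr \<alpha>
      + (-1 / (real n - 2) / R^(n-2)) * 1)"
    by (rule harmonic_on_lincomb[OF _ harmonic_on_const]) auto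
  then show ?thesis
  proof (rule harmonic_on_cong)
    fix y :: 'a assume "y \<in> -{z}"
    then have p: "norm (y - z) > 0" by auto
    have q: "(y - z) \<bullet> (y - z) = norm (y - z) powr 2"
      using p by (simp add: power2_norm_eq_inner[symmetric] powr_realpow)
    have "2 * \<alpha> = - real (n - 2)"
      using n3 by (simp add: \<alpha>_def of_nat_diff)
    then have "((y - z) \<bullet> (y - z)) powr \<alpha> = norm (y - z) powr (- real (n - 2))"
      unfolding q by (simp only: powr_powr)
    also have "\<dots> = 1 / norm (y - z) ^ (n - 2)"
      using p by (simp add: powr_minus powr_realpow divide_inverse)
    finally show "1 / (real n - 2) * ((y - z) \<bullet> (y - z)) powr \<alpha> + (-1 / (real n - 2) / R^(n-2)) * 1
        = newtonian_kernel DIM('a) R (norm (y - z))"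
      using False by (simp add: newtonian_kernel_def n_def[symmetric] diff_divide_distrib mult.commute)
  qed
qed

lemma newtonian_kernel_deriv:
  assumes n: "n \<ge> 2" and d: "d > 0"
  shows "(newtonian_kernel n R has_real_derivative -(1 / d^(n-1))) (at d)"
proof (cases "n = 2")
  case True
  have "((\<lambda>d. ln R - ln d) has_real_derivative -(1 / d)) (at d)"
    using d by (auto intro!: derivative_eq_intros)
  then show ?thesis
    unfolding newtonian_kernel_def[abs_def] using True by simp
next
  case False
  then have n3: "n \<ge> 3" using n by simp
  have inverse_power: "((\<lambda>d. 1 / d^k) has_real_derivative -(real k / d^(k+1))) (at d)"
    if "k \<ge> 1" for k
    using d that by (auto intro!: derivative_eq_intros
        simp: power2_eq_square field_simps simp flip: power_Suc power_add)
  have "n - 1 = n - 2 + 1" using n3 by simp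
  then have "((\<lambda>d. 1 / d^(n-2)) has_real_derivative -(real (n-2) / d^(n-1))) (at d)"
    using inverse_power[of "n - 2"] n3 by (simp only:)
  then have "((\<lambda>d. (1 / d^(n-2) - 1 / R^(n-2)) / (real n - 2)) has_real_derivative
      (-(real (n-2) / d^(n-1)) - 0) / (real n - 2)) (at d)"
    by (intro DERIV_cdivide DERIV_diff DERIV_const)
  moreover have "(-(real (n-2) / d^(n-1)) - 0) / (real n - 2) = -(1 / d^(n-1))"
    using n3 d by (simp add: of_nat_diff)
  ultimately show ?thesis
    unfolding newtonian_kernel_def[abs_def] using False by simp
qed

lemma newtonian_kernel_at_radius: "R > 0 \<Longrightarrow> newtonian_kernel n R R = 0"
  by (simp add: newtonian_kernel_def)

lemma newtonian_kernel_antimono: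
  assumes n: "n \<ge> 2" and d: "0 < d" "d \<le> d'"
  shows "newtonian_kernel n R d' \<le> newtonian_kernel n R d"
proof (cases "d = d'")
  case False
  then have "d < d'" using d by simp
  from MVT2[OF this, of "newtonian_kernel n R" "\<lambda>x. -(1 / x^(n-1))"] obtain t where
    "d < t" "newtonian_kernel n R d' - newtonian_kernel n R d = (d' - d) * -(1 / t^(n-1))"
    using newtonian_kernel_deriv[OF n] d(1) by auto
  moreover have "(d' - d) * (1 / t^(n-1)) \<ge> 0"
    using \<open>d < d'\<close> \<open>d < t\<close> d by simp
  ultimately show ?thesis by simp
qed simp

lemma newtonian_kernel_nonneg:
  assumes "n \<ge> 2" "0 < d" "d \<le> R"
  shows "0 \<le> newtonian_kernel n R d"
  using newtonian_kernel_antimono[OF assms, of R] newtonian_kernel_at_radius[of R n] assms by simp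

lemma newtonian_kernel_doubling_gap:
  assumes n: "n \<ge> 2" and s: "0 < s"
  shows "s / (2 * s)^(n-1) \<le> newtonian_kernel n R s - newtonian_kernel n R (2 * s)"
proof -
  from MVT2[of s "2 * s" "newtonian_kernel n R" "\<lambda>x. -(1 / x^(n-1))"] obtain t where
    t: "s < t" "t < 2 * s"
      "newtonian_kernel n R (2 * s) - newtonian_kernel n R s = (2 * s - s) * -(1 / t^(n-1))"
    using newtonian_kernel_deriv[OF n] s by auto
  have "1 / (2 * s)^(n-1) \<le> 1 / t^(n-1)"
    using t s by (intro divide_left_mono power_mono) auto
  then have "s * (1 / (2 * s)^(n-1)) \<le> s * (1 / t^(n-1))"
    using s by (intro mult_left_mono) auto
  then show ?thesis using t(3) by simp
qed

lemma nn_integral_newtonian_kernel: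
  assumes n: "n \<ge> 2" and d: "0 < d" "d \<le> R"
  shows "(\<integral>\<^sup>+ r. ennreal (indicator {d..R} r / r^(n-1)) \<partial>lborel) = ennreal (newtonian_kernel n R d)"
proof -
  have "((\<lambda>r. 1 / r^(n-1)) has_integral (- newtonian_kernel n R R - - newtonian_kernel n R d)) {d..R}"
  proof (rule fundamental_theorem_of_calculus[OF d(2)])
    fix x assume "x \<in> {d..R}"
    then have "((\<lambda>x. - newtonian_kernel n R x) has_real_derivative - (-(1 / x^(n-1)))) (at x)"
      using d by (intro DERIV_minus newtonian_kernel_deriv[OF n]) auto
    then have "((\<lambda>x. - newtonian_kernel n R x) has_real_derivative 1 / x^(n-1)) (at x within {d..R})"
      by (simp add: has_field_derivative_at_within)
    then show "((\<lambda>x. - newtonian_kernel n R x) has_vector_derivative 1 / x^(n-1)) (at x within {d..R})"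
      by (simp add: has_real_derivative_iff_has_vector_derivative)
  qed
  then have "((\<lambda>r. 1 / r^(n-1)) has_integral newtonian_kernel n R d) {d..R}"
    using newtonian_kernel_at_radius[of R n] d by simp
  from nn_integral_has_integral_lebesgue[OF _ this] show ?thesis
    using d by (simp add: indicator_mult_ennreal mult.commute)
qed


section \<open>Potentials of finitely many point masses\<close>

definition potential ::
    "nat set \<Rightarrow> (nat \<Rightarrow> real) \<Rightarrow> (nat \<Rightarrow> 'a::euclidean_space) \<Rightarrow> real \<Rightarrow> 'a \<Rightarrow> real" where
  "potential I m z R y = (\<Sum>i\<in>I. m i * newtonian_kernel DIM('a) R (dist y (z i)))"

lemma harmonic_on_potential:
  fixes z :: "nat \<Rightarrow> 'a::euclidean_space"
  assumes n: "DIM('a) \<ge> 2" and I: "finite I"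
  shows "harmonic_on (- (z ` I)) (potential I m z R)"
proof -
  have open_Z: "open (- (z ` I))"
    using I by (simp add: open_Compl finite_imp_closed)
  have "harmonic_on (- (z ` I)) (\<lambda>y. m i * newtonian_kernel DIM('a) R (dist y (z i)))"
    if "i \<in> I" for i
  proof -
    have "harmonic_on (- (z ` I)) (\<lambda>y. newtonian_kernel DIM('a) R (norm (y - z i)))"
      using harmonic_on_subset[OF harmonic_newtonian_kernel[OF n] open_Z] that by auto
    then have "harmonic_on (- (z ` I))
        (\<lambda>y. m i * newtonian_kernel DIM('a) R (norm (y - z i)) + 0 * 0)"
      by (rule harmonic_on_lincomb[OF _ harmonic_on_const[OF open_Z]])
    then show ?thesis by (simp add: dist_norm)
  qed
  then show ?thesis
    unfolding potential_def[abs_def] using I open_Z by (intro harmonic_on_sum)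
qed

lemma potential_le_of_dist_ge:
  fixes z :: "nat \<Rightarrow> 'a::euclidean_space"
  assumes "DIM('a) \<ge> 2" "0 < d" "\<And>i. i \<in> I \<Longrightarrow> m i \<ge> 0"
    and "\<And>i. i \<in> I \<Longrightarrow> d \<le> dist y (z i)"
  shows "potential I m z R y \<le> (\<Sum>i\<in>I. m i) * newtonian_kernel DIM('a) R d"
  unfolding potential_def sum_distrib_right
  using assms by (intro sum_mono mult_left_mono newtonian_kernel_antimono) auto

lemma potential_ge_of_dist_le:
  fixes z :: "nat \<Rightarrow> 'a::euclidean_space"
  assumes "DIM('a) \<ge> 2" "\<And>i. i \<in> I \<Longrightarrow> m i \<ge> 0"
    and "\<And>i. i \<in> I \<Longrightarrow> 0 < dist y (z i)" "\<And>i. i \<in> I \<Longrightarrow> dist y (z i) \<le> d"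
  shows "(\<Sum>i\<in>I. m i) * newtonian_kernel DIM('a) R d \<le> potential I m z R y"
  unfolding potential_def sum_distrib_right
  using assms by (intro sum_mono mult_left_mono newtonian_kernel_antimono) auto

lemma nn_integral_potential:
  fixes z :: "nat \<Rightarrow> 'a::euclidean_space"
  assumes n: "DIM('a) \<ge> 2" and I: "finite I" and m: "\<And>i. i \<in> I \<Longrightarrow> m i \<ge> 0"
    and d: "\<And>i. i \<in> I \<Longrightarrow> 0 < dist y (z i)" "\<And>i. i \<in> I \<Longrightarrow> dist y (z i) \<le> R"
  shows "ennreal (potential I m z R y) = (\<integral>\<^sup>+ r. ennreal
      ((\<Sum>i\<in>I. m i * indicator {dist y (z i)..R} r) / r^(DIM('a)-1)) \<partial>lborel)"
proof -
  define f where "f i r = indicator {dist y (z i)..R} r / r^(DIM('a)-1)" for i r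
  have f_meas: "(\<lambda>r. ennreal (f i r)) \<in> borel_measurable lborel" for i
    unfolding f_def by measurable
  have f_nonneg: "f i r \<ge> 0" if "i \<in> I" for i r
  proof (cases "r \<in> {dist y (z i)..R}")
    case True
    then have "dist y (z i) \<le> r" by simp
    with d(1)[OF that] have "r > 0" by linarith
    then show ?thesis by (simp add: f_def)
  qed (simp add: f_def)
  have "ennreal (potential I m z R y)
      = (\<Sum>i\<in>I. ennreal (m i) * ennreal (newtonian_kernel DIM('a) R (dist y (z i))))"
    unfolding potential_def using m newtonian_kernel_nonneg[OF n] d
    by (simp add: sum_ennreal[symmetric] ennreal_mult)
  also have "\<dots> = (\<Sum>i\<in>I. ennreal (m i) * (\<integral>\<^sup>+ r. ennreal (f i r) \<partial>lborel))"
    unfolding f_def using nn_integral_newtonian_kernel[OF n] d by simp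
  also have "\<dots> = (\<integral>\<^sup>+ r. (\<Sum>i\<in>I. ennreal (m i) * ennreal (f i r)) \<partial>lborel)"
    using f_meas by (simp add: nn_integral_cmult nn_integral_sum)
  also have "\<dots> = (\<integral>\<^sup>+ r. ennreal (\<Sum>i\<in>I. m i * f i r) \<partial>lborel)"
  proof (intro nn_integral_cong)
    fix r
    have "(\<Sum>i\<in>I. ennreal (m i) * ennreal (f i r)) = (\<Sum>i\<in>I. ennreal (m i * f i r))"
      using m f_nonneg by (intro sum.cong) (simp_all add: ennreal_mult)
    also have "\<dots> = ennreal (\<Sum>i\<in>I. m i * f i r)"
      using m f_nonneg by (intro sum_ennreal) (simp add: mult_nonneg_nonneg)
    finally show "(\<Sum>i\<in>I. ennreal (m i) * ennreal (f i r)) = ennreal (\<Sum>i\<in>I. m i * f i r)" .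
  qed
  also have "\<dots> = (\<integral>\<^sup>+ r. ennreal
      ((\<Sum>i\<in>I. m i * indicator {dist y (z i)..R} r) / r^(DIM('a)-1)) \<partial>lborel)"
    by (simp add: f_def sum_divide_distrib)
  finally show ?thesis .
qed

lemma nn_integral_cmult_le:
  assumes c: "c \<ge> 0"
  shows "(\<integral>\<^sup>+x. ennreal c * f x \<partial>M) \<le> ennreal c * integral\<^sup>N M f"
proof (cases "c = 0")
  case False
  then have c0: "ennreal c \<noteq> 0" "ennreal c \<noteq> top" using c by auto
  show ?thesis unfolding nn_integral_def
  proof (rule SUP_least)
    fix g assume g: "g \<in> {g. simple_function M g \<and> g \<le> (\<lambda>x. ennreal c * f x)}"
    define g' where "g' x = g x / ennreal c" for x
    have g'_simple: "simple_function M g'"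
      using simple_function_compose[of M g "\<lambda>y. y / ennreal c"] g unfolding g'_def o_def by auto
    have "g' x \<le> f x" for x
    proof -
      have "g x \<le> f x * ennreal c" using g by (auto simp: le_fun_def mult.commute)
      then have "g x / ennreal c \<le> (f x * ennreal c) / ennreal c" by (rule divide_right_mono_ennreal)
      then show ?thesis unfolding g'_def using mult_divide_eq_ennreal[OF c0] by simp
    qed
    then have g'_le: "g' \<le> f" by (simp add: le_fun_def)
    have "g = (\<lambda>x. ennreal c * g' x)"
      unfolding g'_def by (rule ext)
        (simp add: ennreal_times_divide mult.commute[of "ennreal c"] mult_divide_eq_ennreal[OF c0])
    then have "integral\<^sup>S M g = ennreal c * integral\<^sup>S M g'"
      by (simp add: g'_simple)
    also have "\<dots> \<le> ennreal c * (SUP g \<in> {g. simple_function M g \<and> g \<le> f}. integral\<^sup>S M g)"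
      using g'_simple g'_le by (intro mult_left_mono SUP_upper) auto
    finally show "integral\<^sup>S M g \<le> ennreal c * (SUP g \<in> {g. simple_function M g \<and> g \<le> f}. integral\<^sup>S M g)" .
  qed
qed simp

definition inner_margin :: "real \<Rightarrow> 'a::metric_space set \<Rightarrow> 'a set" where
  "inner_margin \<rho> U = {y. \<exists>r>\<rho>. ball y r \<subseteq> U}"

lemma open_inner_margin: "open (inner_margin \<rho> U)"
  unfolding open_contains_ball
proof (intro ballI)
  fix y assume "y \<in> inner_margin \<rho> U"
  then obtain r where r: "r > \<rho>" "ball y r \<subseteq> U"
    unfolding inner_margin_def by auto
  have "y' \<in> inner_margin \<rho> U" if "y' \<in> ball y (r - \<rho>)" for y'
  proof -
    have "ball y' (r - dist y y') \<subseteq> ball y r"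
      by (auto simp: dist_commute) (metis add.commute dist_triangle less_diff_eq order_le_less_trans)
    then show ?thesis
      using that r unfolding inner_margin_def by (auto intro!: exI[of _ "r - dist y y'"])
  qed
  then show "\<exists>e>0. ball y e \<subseteq> inner_margin \<rho> U"
    using r by (intro exI[of _ "r - \<rho>"]) auto
qed

lemma cball_subset_of_inner_margin:
  assumes "y \<in> inner_margin \<rho> U"
  shows "cball y \<rho> \<subseteq> U"
proof -
  obtain r where "r > \<rho>" "ball y r \<subseteq> U"
    using assms unfolding inner_margin_def by auto
  moreover have "cball y \<rho> \<subseteq> ball y r"
    using \<open>r > \<rho>\<close> by (auto simp: subset_iff)
  ultimately show ?thesis by blast
qed

lemma emeasure_inner_margin_approx:
  fixes U :: "'b::metric_space set"
  assumes E: "E \<in> sets M" "E \<subseteq> U" "open U" "\<And>\<rho>. E \<inter> inner_margin \<rho> U \<in> sets M"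
    and pos: "0 < emeasure M E" "emeasure M E < \<infinity>"
  obtains \<rho> where "\<rho> > 0" "emeasure M E / 2 < emeasure M (E \<inter> inner_margin \<rho> U)"
proof -
  define C where "C j = E \<inter> inner_margin (1 / real (Suc j)) U" for j
  have "incseq C"
  proof (rule incseq_SucI)
    fix j
    have "1 / real (Suc (Suc j)) \<le> 1 / real (Suc j)" by (simp add: frac_le)
    then show "C j \<subseteq> C (Suc j)"
      unfolding C_def inner_margin_def by (auto intro: le_less_trans)
  qed
  moreover have "(\<Union>j. C j) = E"
  proof
    show "(\<Union>j. C j) \<subseteq> E" unfolding C_def by auto
    show "E \<subseteq> (\<Union>j. C j)"
    proof
      fix y assume "y \<in> E"
      then obtain e where e: "e > 0" "ball y e \<subseteq> U"
        using E(2,3) open_contains_ball by blast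
      then obtain j where "1 / real (Suc j) < e"
        using reals_Archimedean[OF e(1)] by (auto simp: inverse_eq_divide)
      then show "y \<in> (\<Union>j. C j)"
        using e \<open>y \<in> E\<close> unfolding C_def inner_margin_def by blast
    qed
  qed
  ultimately have "(\<lambda>j. emeasure M (C j)) \<longlonglongrightarrow> emeasure M E"
    using Lim_emeasure_incseq[of C M] E(4) unfolding C_def by auto
  moreover have "emeasure M E / 2 < emeasure M E"
  proof -
    obtain q where q: "emeasure M E = ennreal q" "q > 0"
      using pos by (cases "emeasure M E") auto
    have "ennreal q / 2 = ennreal (q / 2)"
      using q(2) by (intro ennreal_divide_numeral) simp
    then show ?thesis
      using q by (simp add: ennreal_less_iff)
  qed
  ultimately have "\<forall>\<^sub>F j in sequentially. emeasure M E / 2 < emeasure M (C j)"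
    by (rule order_tendstoD(1))
  then obtain j where "emeasure M E / 2 < emeasure M (C j)"
    by (metis eventually_sequentially order_refl)
  then show ?thesis
    using that[of "1 / real (Suc j)"] unfolding C_def by auto
qed

lemma bounded_borel_small_partition:
  fixes C :: "'a::euclidean_space set"
  assumes C: "bounded C" "C \<in> sets borel" and \<eta>: "\<eta> > 0"
  obtains I :: "nat set" and D :: "nat \<Rightarrow> 'a set" and z :: "nat \<Rightarrow> 'a"
  where "finite I" "disjoint_family_on D I" "\<And>i. i \<in> I \<Longrightarrow> D i \<in> sets borel"
    "(\<Union>i\<in>I. D i) = C" "\<And>i. i \<in> I \<Longrightarrow> z i \<in> D i"
    "\<And>i p. i \<in> I \<Longrightarrow> p \<in> D i \<Longrightarrow> dist p (z i) < 2 * \<eta>"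
proof -
  obtain x0 s where C_sub: "C \<subseteq> cball x0 s"
    using C(1) by (meson bounded_subset_cball)
  have "cball x0 s \<subseteq> (\<Union>c\<in>cball x0 s. ball c \<eta>)"
    using \<eta> by auto
  from compactE_image[OF compact_cball open_ball this] obtain T
    where "finite T" "cball x0 s \<subseteq> (\<Union>c\<in>T. ball c \<eta>)"
    by metis
  moreover from \<open>finite T\<close> obtain k f where "T = f ` {i::nat. i < k}"
    unfolding finite_conv_nat_seg_image by metis
  ultimately have cover: "C \<subseteq> (\<Union>i\<in>{0..<k}. ball (f i) \<eta>)"
    unfolding atLeast0LessThan lessThan_def using C_sub by blast
  define A where "A j = C \<inter> ball (f j) \<eta>" for j
  define D where "D = disjointed A"
  define I where "I = {j\<in>{0..<k}. D j \<noteq> {}}"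
  define z where "z j = (SOME p. p \<in> D j)" for j
  have D_borel: "D j \<in> sets borel" for j
    unfolding D_def disjointed_def A_def using C(2) by (intro sets.Diff sets.finite_UN) auto
  have "(\<Union>i\<in>I. D i) = (\<Union>i\<in>{0..<k}. D i)"
    unfolding I_def by auto
  also have "\<dots> = (\<Union>i\<in>{0..<k}. A i)"
    unfolding D_def by (rule finite_UN_disjointed_eq)
  also have "\<dots> = C"
    using cover unfolding A_def by auto
  finally have union: "(\<Union>i\<in>I. D i) = C" .
  have z: "z i \<in> D i" if "i \<in> I" for i
    using that unfolding I_def z_def by (auto intro: someI)
  show ?thesis
  proof (rule that[of I D z])
    show "finite I" unfolding I_def by auto
    show "disjoint_family_on D I"
      unfolding D_def by (rule disjoint_family_on_mono[OF subset_UNIV disjoint_family_disjointed])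
    fix i p assume "i \<in> I" "p \<in> D i"
    moreover have "z i \<in> D i"
      using z \<open>i \<in> I\<close> .
    ultimately have "p \<in> ball (f i) \<eta>" "z i \<in> ball (f i) \<eta>"
      using disjointed_subset[of A i] unfolding D_def A_def by auto
    then show "dist p (z i) < 2 * \<eta>"
      using dist_triangle[of p "z i" "f i"] by (simp add: dist_commute)
  qed (use D_borel union z in auto)
qed

lemma usc_on_open_sublevel:
  fixes \<Omega> :: "'a::metric_space set"
  assumes "open \<Omega>" "usc_on \<Omega> v"
  shows "open {y\<in>\<Omega>. v y < c}"
  unfolding open_contains_ball
proof (intro ballI)
  fix x assume x: "x \<in> {y\<in>\<Omega>. v y < c}"
  then have "\<forall>\<^sub>F y in at x. v y < c"
    using assms at_within_open[of x \<Omega>] unfolding usc_on_def by auto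
  then obtain S where S: "open S" "x \<in> S" "\<forall>y\<in>S. y \<noteq> x \<longrightarrow> v y < c"
    unfolding eventually_at_topological by blast
  then obtain e where "e > 0" "ball x e \<subseteq> S \<inter> \<Omega>"
    using assms(1) x open_contains_ball[of "S \<inter> \<Omega>"] by blast
  then show "\<exists>e>0. ball x e \<subseteq> {y\<in>\<Omega>. v y < c}"
    using S x by (intro exI[of _ e]) auto
qed


lemma potential_gap_ge:
  fixes z :: "nat \<Rightarrow> 'a::euclidean_space"
  assumes n: "DIM('a) \<ge> 2" and s: "0 < s" and m: "\<And>i. i \<in> I \<Longrightarrow> m i \<ge> 0"
    and d: "\<And>i. i \<in> I \<Longrightarrow> 0 < dist y (z i)" "\<And>i. i \<in> I \<Longrightarrow> dist y (z i) \<le> s"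
  shows "(\<Sum>i\<in>I. m i) * (s / (2 * s)^(DIM('a)-1))
    \<le> potential I m z R y - (\<Sum>i\<in>I. m i) * newtonian_kernel DIM('a) R (2 * s)"
proof -
  have "(\<Sum>i\<in>I. m i) * (s / (2 * s)^(DIM('a)-1))
      \<le> (\<Sum>i\<in>I. m i) * (newtonian_kernel DIM('a) R s - newtonian_kernel DIM('a) R (2 * s))"
    using m by (intro mult_left_mono newtonian_kernel_doubling_gap[OF n s] sum_nonneg)
  also have "\<dots> \<le> potential I m z R y - (\<Sum>i\<in>I. m i) * newtonian_kernel DIM('a) R (2 * s)"
    using potential_ge_of_dist_le[OF n m d] by (simp add: right_diff_distrib)
  finally show ?thesis .
qed

section \<open>Comparison on a perforated ball\<close>

lemma subharmonic_le_on_perforated_ball: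
  fixes v :: "'a::euclidean_space \<Rightarrow> ereal" and z :: "nat \<Rightarrow> 'a"
  assumes v: "subharmonic_on \<Omega> v" and R: "0 < R" "cball x0 R \<subseteq> \<Omega>"
    and I: "finite I" and \<rho>: "\<rho> > 0" and x0: "\<And>i. i \<in> I \<Longrightarrow> \<rho> < dist x0 (z i)"
    and \<phi>: "harmonic_on (- (z ` I)) \<phi>"
    and boundary: "\<And>x. x \<in> cball x0 R \<Longrightarrow> (\<forall>i\<in>I. \<rho> \<le> dist x (z i)) \<Longrightarrow>
        dist x0 x = R \<or> (\<exists>i\<in>I. dist x (z i) = \<rho>) \<Longrightarrow> v x \<le> ereal (\<phi> x)"
  shows "v x0 \<le> ereal (\<phi> x0)"
proof -
  define G where "G = ball x0 R - (\<Union>i\<in>I. cball (z i) \<rho>)"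
  define W where "W = (\<Inter>i\<in>I. {y. \<rho> \<le> dist y (z i)})"
  have G_open: "open G"
    unfolding G_def using I by (intro open_Diff closed_UN) auto
  have "closed W"
    unfolding W_def by (intro closed_INT ballI closed_Collect_le continuous_intros)
  moreover have "G \<subseteq> W"
    unfolding G_def W_def by (auto simp: dist_commute)
  ultimately have closure_W: "closure G \<subseteq> W"
    by (rule closure_minimal[rotated])
  have closure_ball: "closure G \<subseteq> cball x0 R"
    by (rule closure_minimal) (auto simp: G_def)
  have W_sub: "W \<subseteq> - (z ` I)"
    unfolding W_def using \<rho> by force
  have "bounded G"
    unfolding G_def by (rule bounded_subset[OF bounded_ball]) auto
  then have "compact (closure G)"
    by (simp add: compact_closure)
  moreover have "closure G \<subseteq> \<Omega>"
    using closure_ball R(2) by blast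
  moreover have "harmonic_on G \<phi>"
    using harmonic_on_subset[OF \<phi> G_open] \<open>G \<subseteq> W\<close> W_sub by blast
  moreover have "continuous_on (closure G) \<phi>"
    using harmonic_on_continuous[OF \<phi>] closure_W W_sub by (blast intro: continuous_on_subset)
  moreover have "v x \<le> ereal (\<phi> x)" if "x \<in> frontier G" for x
  proof -
    have x: "x \<in> cball x0 R" "x \<in> W" "x \<notin> G"
      using that closure_ball closure_W G_open by (auto simp: frontier_def interior_open)
    then have "dist x0 x = R \<or> (\<exists>i\<in>I. dist x (z i) = \<rho>)"
      unfolding G_def W_def by (force simp: dist_commute)
    with x show ?thesis
      using boundary unfolding W_def by blast
  qed
  moreover have "x0 \<in> G"
    using R(1) x0 unfolding G_def by (force simp: dist_commute)
  ultimately show ?thesis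
    using v G_open unfolding subharmonic_on_def by blast
qed

lemma subharmonic_le_barrier:
  fixes v :: "'a::euclidean_space \<Rightarrow> ereal" and z :: "nat \<Rightarrow> 'a"
  assumes v: "subharmonic_on \<Omega> v" and R: "0 < R" "cball x0 R \<subseteq> \<Omega>"
    and I: "finite I" and \<rho>: "\<rho> > 0" and x0: "\<And>i. i \<in> I \<Longrightarrow> \<rho> < dist x0 (z i)"
    and P: "harmonic_on (- (z ` I)) P" and T: "T > 0" and aL: "a \<le> L"
    and v_L: "\<forall>y\<in>cball x0 R. v y < ereal L"
    and v_a: "\<And>i y. i \<in> I \<Longrightarrow> y \<in> cball (z i) \<rho> \<Longrightarrow> v y < ereal a"
    and P_sphere: "\<And>y. dist x0 y = R \<Longrightarrow> P y \<le> \<beta>"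
    and P_holes: "\<And>y. y \<in> cball x0 R \<Longrightarrow> \<forall>i\<in>I. \<rho> \<le> dist y (z i) \<Longrightarrow> P y \<le> \<beta> + T"
  shows "v x0 \<le> ereal (L - (L - a) * ((P x0 - \<beta>) / T))"
proof (rule subharmonic_le_on_perforated_ball[OF v R I \<rho> x0])
  have "harmonic_on (- (z ` I)) (\<lambda>y. 1 * (L + (L - a) * \<beta> / T) + (- (L - a) / T) * P y)"
    using I by (intro harmonic_on_lincomb harmonic_on_const P) (simp add: open_Compl finite_imp_closed)
  then show "harmonic_on (- (z ` I)) (\<lambda>y. L - (L - a) * ((P y - \<beta>) / T))"
    by (rule harmonic_on_cong) (use T in \<open>simp add: field_simps\<close>)
next
  fix x assume x: "x \<in> cball x0 R" "\<forall>i\<in>I. \<rho> \<le> dist x (z i)"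
    and "dist x0 x = R \<or> (\<exists>i\<in>I. dist x (z i) = \<rho>)"
  then consider "dist x0 x = R" | i where "i \<in> I" "dist x (z i) = \<rho>" by blast
  then show "v x \<le> ereal (L - (L - a) * ((P x - \<beta>) / T))"
  proof cases
    case 1
    then have "(L - a) * ((P x - \<beta>) / T) \<le> 0"
      using P_sphere[of x] T aL by (simp add: mult_nonneg_nonpos divide_nonpos_pos)
    then have "ereal L \<le> ereal (L - (L - a) * ((P x - \<beta>) / T))"
      by simp
    moreover have "v x < ereal L"
      using v_L x(1) by blast
    ultimately show ?thesis
      by (metis less_imp_le order.trans)
  next
    case 2
    then have "v x < ereal a"
      using v_a by (simp add: dist_commute)
    moreover have "(L - a) * ((P x - \<beta>) / T) \<le> (L - a) * 1"
      using P_holes[OF x] T aL by (intro mult_left_mono) simp_all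
    then have "ereal a \<le> ereal (L - (L - a) * ((P x - \<beta>) / T))"
      by simp
    ultimately show ?thesis
      by (metis less_imp_le order.trans)
  qed
qed

text \<open>If \<open>u x0 < a < v x0\<close>, then \<open>L - (L - a) \<theta> < v x0\<close> for \<open>L > v x0\<close> close to \<open>v x0\<close>.\<close>
lemma le_at_point_of_uniform_decrease:
  fixes u v :: "'a::metric_space \<Rightarrow> ereal"
  assumes \<Omega>: "open \<Omega>" and usc: "usc_on \<Omega> u" "usc_on \<Omega> v" and x0: "x0 \<in> \<Omega>" "v x0 \<noteq> \<infinity>"
    and uv: "\<forall>y\<in>S. v y \<le> u y" and \<theta>: "\<theta> > 0"
    and decrease: "\<forall>\<^sub>F r in at_right 0. \<forall>L a. cball x0 r \<subseteq> \<Omega> \<longrightarrow> (\<forall>y\<in>cball x0 r. v y < ereal L)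
        \<longrightarrow> (\<forall>y\<in>S \<inter> ball x0 r. v y < ereal a) \<longrightarrow> ereal a < v x0 \<longrightarrow> v x0 \<le> ereal (L - (L - a) * \<theta>)"
  shows "v x0 \<le> u x0"
proof (rule ccontr)
  assume "\<not> v x0 \<le> u x0"
  then have "u x0 < v x0" by simp
  then obtain a where a: "u x0 < ereal a" "ereal a < v x0"
    using ereal_dense2 by blast
  obtain V where V: "v x0 = ereal V"
    using x0(2) a(2) by (cases "v x0") auto
  define \<delta> where "\<delta> = \<theta> * (V - a) / 2"
  have "a < V" using a(2) V by simp
  then have \<delta>: "\<delta> > 0" unfolding \<delta>_def using \<theta> by simp
  have "x0 \<in> {y\<in>\<Omega>. v y < ereal (V + \<delta>)}"
    using x0(1) V \<delta> by simp
  then obtain r1 where r1: "r1 > 0" "ball x0 r1 \<subseteq> {y\<in>\<Omega>. v y < ereal (V + \<delta>)}"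
    using usc_on_open_sublevel[OF \<Omega> usc(2)] open_contains_ball by blast
  have "x0 \<in> {y\<in>\<Omega>. u y < ereal a}"
    using x0(1) a(1) by simp
  then obtain r2 where r2: "r2 > 0" "ball x0 r2 \<subseteq> {y\<in>\<Omega>. u y < ereal a}"
    using usc_on_open_sublevel[OF \<Omega> usc(1)] open_contains_ball by blast
  obtain b where b: "b > 0" "\<And>r. 0 < r \<Longrightarrow> r < b \<Longrightarrow> \<forall>L a. cball x0 r \<subseteq> \<Omega> \<longrightarrow>
      (\<forall>y\<in>cball x0 r. v y < ereal L) \<longrightarrow> (\<forall>y\<in>S \<inter> ball x0 r. v y < ereal a)
      \<longrightarrow> ereal a < v x0 \<longrightarrow> v x0 \<le> ereal (L - (L - a) * \<theta>)"
    using decrease unfolding eventually_at_right_field by blast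
  define r where "r = min b (min r1 r2) / 2"
  have r: "0 < r" "r < b" "r < r1" "r < r2"
    unfolding r_def using b(1) r1(1) r2(1) by auto
  then have "cball x0 r \<subseteq> ball x0 r1"
    by (auto simp: subset_iff)
  then have "cball x0 r \<subseteq> \<Omega>" "\<forall>y\<in>cball x0 r. v y < ereal (V + \<delta>)"
    using r1(2) by auto
  moreover have "\<forall>y\<in>S \<inter> ball x0 r. v y < ereal a"
  proof
    fix y assume y: "y \<in> S \<inter> ball x0 r"
    then have "y \<in> ball x0 r2"
      using r(4) by simp
    then have "u y < ereal a"
      using r2(2) by blast
    then show "v y < ereal a"
      using uv y by (blast intro: order.strict_trans1)
  qed
  ultimately have "v x0 \<le> ereal ((V + \<delta>) - ((V + \<delta>) - a) * \<theta>)"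
    using b(2)[OF r(1,2)] a(2) by blast
  then have "(V - a) * \<theta> + \<delta> * \<theta> \<le> \<delta>"
    using V by (simp add: algebra_simps)
  moreover have "\<delta> * \<theta> > 0" "(V - a) * \<theta> > 0"
    using \<delta> \<theta> \<open>a < V\<close> by simp_all
  moreover have "\<delta> = (V - a) * \<theta> / 2"
    unfolding \<delta>_def by simp
  ultimately show False
    by linarith
qed

section \<open>Measures of growth \<open>h\<close> on \<open>K\<close>\<close>

locale h_regular_measure =
  fixes \<Omega> K N :: "'a::euclidean_space set" and h :: "real \<Rightarrow> real" and \<mu> :: "'a measure"
    and A B \<epsilon>\<^sub>0 M c s1 :: real
  assumes dim: "DIM('a) \<ge> 2"
    and open_\<Omega>: "open \<Omega>" and K_borel: "K \<in> sets borel" and K_sub: "K \<subseteq> \<Omega>"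
    and K_nonempty: "K \<noteq> {}"
    and sets_\<mu>: "sets \<mu> = sets (restrict_space borel \<Omega>)" and N_null: "N \<in> null_sets \<mu>"
    and h_pos: "\<And>r. r > 0 \<Longrightarrow> h r > 0"
    and A_pos: "A > 0" and B_pos: "B > 0" and \<epsilon>\<^sub>0_pos: "\<epsilon>\<^sub>0 > 0"
    and growth_lower: "\<And>x \<epsilon>. x \<in> K \<Longrightarrow> 0 < \<epsilon> \<Longrightarrow> \<epsilon> < \<epsilon>\<^sub>0 \<Longrightarrow>
        ennreal (A * h \<epsilon>) \<le> emeasure \<mu> (K \<inter> ball x \<epsilon>)"
    and growth_upper: "\<And>x \<epsilon>. x \<in> K \<Longrightarrow> 0 < \<epsilon> \<Longrightarrow> \<epsilon> < \<epsilon>\<^sub>0 \<Longrightarrow>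
        emeasure \<mu> (K \<inter> ball x \<epsilon>) \<le> ennreal (B * h \<epsilon>)"
    and M_pos: "M > 0" and c_gt_4: "c > 4" and s1_pos: "s1 > 0"
    and dini: "\<And>\<epsilon>. 0 < \<epsilon> \<Longrightarrow> \<epsilon> < s1 \<Longrightarrow>
        (\<integral>\<^sup>+ r\<in>{0<..c * \<epsilon>}. ennreal (h r / r ^ (DIM('a) - 1)) \<partial>lborel)
          \<le> ennreal (M * h \<epsilon> / \<epsilon> ^ (DIM('a) - 2))"
begin

definition doubling_const :: real where
  "doubling_const = 2 * M * B * c ^ (DIM('a) - 2) / A"

definition potential_const :: real where
  "potential_const = B * 4 ^ (DIM('a) - 2) * M * ((B / A) * doubling_const)^2 * (c / 16) ^ (DIM('a) - 2)"

definition decrease_rate :: real where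
  "decrease_rate = A / (2 ^ DIM('a) * potential_const)"

definition admissible_scale :: "real \<Rightarrow> bool" where
  "admissible_scale s \<longleftrightarrow> 0 < s \<and> 2 * c * s < \<epsilon>\<^sub>0 \<and> 16 * s < \<epsilon>\<^sub>0 \<and> 2 * s < s1 \<and> 16 * s / c < s1"

lemma doubling_const_pos: "doubling_const > 0"
  unfolding doubling_const_def using M_pos B_pos A_pos c_gt_4 by simp

lemma potential_const_pos: "potential_const > 0"
  unfolding potential_const_def using M_pos B_pos A_pos c_gt_4 doubling_const_pos by simp

lemma decrease_rate_pos: "decrease_rate > 0"
  unfolding decrease_rate_def using A_pos potential_const_pos by simp

lemma sets_\<mu>I: "S \<in> sets borel \<Longrightarrow> S \<subseteq> \<Omega> \<Longrightarrow> S \<in> sets \<mu>"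
  using sets_\<mu> sets_restrict_space_iff[of \<Omega> borel S] open_\<Omega> by auto

lemma K_inter_ball_in_sets: "K \<inter> ball y r \<in> sets \<mu>"
  using K_borel K_sub by (intro sets_\<mu>I) auto

lemma h_quasi_mono:
  assumes "0 < t" "t \<le> t'" "t' < \<epsilon>\<^sub>0"
  shows "A * h t \<le> B * h t'"
proof -
  obtain x where x: "x \<in> K"
    using K_nonempty by blast
  have "ennreal (A * h t) \<le> emeasure \<mu> (K \<inter> ball x t)"
    using growth_lower x assms by auto
  also have "\<dots> \<le> emeasure \<mu> (K \<inter> ball x t')"
    using assms by (intro emeasure_mono K_inter_ball_in_sets) auto
  also have "\<dots> \<le> ennreal (B * h t')"
    using growth_upper x assms by auto
  finally show ?thesis
    using h_pos[of t'] B_pos assms by simp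
qed

lemma emeasure_K_inter_ball_le:
  assumes "0 < r" "2 * r < \<epsilon>\<^sub>0"
  shows "emeasure \<mu> (K \<inter> ball y r) \<le> ennreal (B * h (2 * r))"
proof (cases "K \<inter> ball y r = {}")
  case False
  then obtain x where x: "x \<in> K" "dist y x < r" by auto
  have "K \<inter> ball y r \<subseteq> K \<inter> ball x (2 * r)"
  proof
    fix p assume "p \<in> K \<inter> ball y r"
    moreover have "dist x p \<le> dist y x + dist y p"
      by (metis dist_commute dist_triangle)
    ultimately show "p \<in> K \<inter> ball x (2 * r)"
      using x by auto
  qed
  then have "emeasure \<mu> (K \<inter> ball y r) \<le> emeasure \<mu> (K \<inter> ball x (2 * r))"
    by (intro emeasure_mono K_inter_ball_in_sets)
  also have "\<dots> \<le> ennreal (B * h (2 * r))"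
    using growth_upper x assms by auto
  finally show ?thesis .
qed simp

text \<open>On \<open>(t, T]\<close> the integrand of the Dini condition is at least \<open>(A / B) h(t) / T^(n-1)\<close>.\<close>
lemma dini_integral_ge:
  assumes t: "0 < t" "t < T" "T < \<epsilon>\<^sub>0"
  shows "ennreal (A * h t / B / T ^ (DIM('a) - 1) * (T - t))
    \<le> (\<integral>\<^sup>+ r\<in>{0<..T}. ennreal (h r / r ^ (DIM('a) - 1)) \<partial>lborel)"
proof -
  define n where "n = DIM('a)"
  define k where "k = A * h t / B / T ^ (n - 1)"
  have k_nonneg: "k \<ge> 0"
    unfolding k_def using A_pos B_pos h_pos[of t] t by simp
  have integrand: "ennreal k * indicator {t<..T} r \<le> ennreal (h r / r ^ (n - 1)) * indicator {0<..T} r" for r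
  proof (cases "r \<in> {t<..T}")
    case True
    then have r: "t < r" "r \<le> T" "r > 0" using t by auto
    have "A * h t / B \<le> h r"
      using h_quasi_mono[of t r] r t B_pos by (simp add: pos_divide_le_eq mult.commute)
    moreover have "r ^ (n - 1) \<le> T ^ (n - 1)"
      using r by (intro power_mono) auto
    ultimately have "k \<le> h r / r ^ (n - 1)"
      unfolding k_def using A_pos B_pos h_pos[of t] h_pos[of r] t r by (intro frac_le) auto
    then show ?thesis using r by (simp add: indicator_def ennreal_leI)
  qed simp
  have "ennreal (k * (T - t)) = (\<integral>\<^sup>+ r. ennreal k * indicator {t<..T} r \<partial>lborel)"
    using t k_nonneg by (simp add: nn_integral_cmult_indicator ennreal_mult)
  also have "\<dots> \<le> (\<integral>\<^sup>+ r\<in>{0<..T}. ennreal (h r / r ^ (n - 1)) \<partial>lborel)"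
    by (intro nn_integral_mono) (use integrand in auto)
  finally show ?thesis
    unfolding k_def n_def .
qed

lemma h_doubling:
  assumes s: "0 < s" "s < s1" "c * s < \<epsilon>\<^sub>0"
  shows "h (c * s / 2) \<le> doubling_const * h s"
proof -
  define n where "n = DIM('a)"
  have cs: "c * s > 0"
    using s(1) c_gt_4 by simp
  have "ennreal (A * h (c * s / 2) / B / (c * s) ^ (n - 1) * (c * s - c * s / 2))
      \<le> ennreal (M * h s / s ^ (n - 2))"
    using dini_integral_ge[of "c * s / 2" "c * s"] dini[OF s(1,2)] cs s(3) unfolding n_def
    by (auto intro: order.trans)
  then have le: "A * h (c * s / 2) / B / (c * s) ^ (n - 1) * (c * s / 2) \<le> M * h s / s ^ (n - 2)"
    using M_pos h_pos[of s] s(1) by simp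
  have "(c * s) ^ (n - 1) = (c * s) * (c ^ (n - 2) * s ^ (n - 2))"
  proof -
    have "n - 1 = Suc (n - 2)" using dim unfolding n_def by simp
    then show ?thesis by (simp add: power_mult_distrib)
  qed
  then have "A * h (c * s / 2) / B / (c * s) ^ (n - 1) * (c * s / 2)
      = A * h (c * s / 2) / (2 * B * c ^ (n - 2) * s ^ (n - 2))"
    using s c_gt_4 B_pos by (simp add: field_simps)
  with le have "A * h (c * s / 2) / (2 * B * c ^ (n - 2) * s ^ (n - 2)) \<le> M * h s / s ^ (n - 2)"
    by simp
  then have "A * h (c * s / 2) \<le> (M * h s / s ^ (n - 2)) * (2 * B * c ^ (n - 2) * s ^ (n - 2))"
    using s c_gt_4 B_pos by (simp add: divide_le_eq mult.commute)
  then have "A * h (c * s / 2) \<le> 2 * M * B * c ^ (n - 2) * h s"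
    using s by (simp add: field_simps)
  then show ?thesis
    using A_pos unfolding doubling_const_def n_def by (simp add: field_simps)
qed

text \<open>Two applications of the doubling inequality, each preceded by quasi-monotonicity.\<close>
lemma h_small_scale_le:
  assumes s: "0 < s" "2 * s < s1" "2 * c * s < \<epsilon>\<^sub>0"
  shows "h (16 * s / c) \<le> ((B / A) * doubling_const)^2 * h s"
proof -
  define K0 where "K0 = doubling_const"
  have K0: "K0 > 0" unfolding K0_def by (rule doubling_const_pos)
  have "c * s > 0"
    using s c_gt_4 by simp
  then have cs: "c * s > 0" "c * s < \<epsilon>\<^sub>0"
    using s(3) by linarith+
  have "16 \<le> c * c"
    using mult_mono[of 4 c 4 c] c_gt_4 by simp
  then have "16 * s \<le> c * (c * s)"
    using s(1) mult_right_mono[of 16 "c * c" s] by (simp add: mult.assoc)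
  then have "16 * s / c \<le> c * s"
    using c_gt_4 by (simp add: divide_le_eq mult.commute)
  moreover have "0 < 16 * s / c"
    using s c_gt_4 by simp
  ultimately have "A * h (16 * s / c) \<le> B * h (c * s)"
    using cs by (intro h_quasi_mono)
  then have "h (16 * s / c) \<le> (B / A) * h (c * s)"
    using A_pos by (simp add: field_simps)
  also have "\<dots> \<le> (B / A) * (K0 * h (2 * s))"
    using h_doubling[of "2 * s"] s A_pos B_pos unfolding K0_def
    by (intro mult_left_mono) (simp_all add: mult_ac)
  also have "\<dots> \<le> (B / A) * (K0 * ((B / A) * h (c * s / 2)))"
    using h_quasi_mono[of "2 * s" "c * s / 2"] s c_gt_4 cs A_pos B_pos K0
    by (intro mult_left_mono) (simp_all add: field_simps)
  also have "\<dots> \<le> (B / A) * (K0 * ((B / A) * (K0 * h s)))"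
    using h_doubling[of s] s cs A_pos B_pos K0 unfolding K0_def
    by (intro mult_left_mono) simp_all
  finally show ?thesis
    unfolding K0_def by (simp add: power2_eq_square mult_ac)
qed


lemma mass_near_le:
  assumes I: "finite I" "disjoint_family_on D I" "\<And>i. i \<in> I \<Longrightarrow> D i \<in> sets \<mu>"
      "\<And>i. i \<in> I \<Longrightarrow> D i \<subseteq> K" "\<And>i. i \<in> I \<Longrightarrow> emeasure \<mu> (D i) \<noteq> \<infinity>"
    and \<rho>: "\<And>i p. i \<in> I \<Longrightarrow> p \<in> D i \<Longrightarrow> dist p (z i) < \<rho>" "\<And>i. i \<in> I \<Longrightarrow> \<rho> \<le> dist y (z i)"
    and r: "0 < r" "4 * r < \<epsilon>\<^sub>0"
  shows "(\<Sum>i\<in>{i\<in>I. dist y (z i) \<le> r}. measure \<mu> (D i)) \<le> B * h (4 * r)"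
proof -
  define J where "J = {i\<in>I. dist y (z i) \<le> r}"
  have "(\<Union>i\<in>J. D i) \<subseteq> K \<inter> ball y (2 * r)"
  proof
    fix p assume "p \<in> (\<Union>i\<in>J. D i)"
    then obtain i where i: "i \<in> I" "dist y (z i) \<le> r" "p \<in> D i"
      unfolding J_def by auto
    then have "dist p (z i) < \<rho>" "\<rho> \<le> r" "p \<in> K"
      using \<rho> I(4) by (force, force, blast)
    moreover have "dist y p \<le> dist y (z i) + dist p (z i)"
      by (metis dist_commute dist_triangle)
    ultimately show "p \<in> K \<inter> ball y (2 * r)"
      using i(2) by auto
  qed
  then have "emeasure \<mu> (\<Union>i\<in>J. D i) \<le> emeasure \<mu> (K \<inter> ball y (2 * r))"
    by (intro emeasure_mono K_inter_ball_in_sets)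
  also have "\<dots> \<le> ennreal (B * h (4 * r))"
    using emeasure_K_inter_ball_le[of "2 * r" y] r by simp
  finally have "measure \<mu> (\<Union>i\<in>J. D i) \<le> B * h (4 * r)"
    unfolding measure_def using B_pos h_pos[of "4 * r"] r by (intro enn2real_leI) auto
  moreover have "measure \<mu> (\<Union>i\<in>J. D i) = (\<Sum>i\<in>J. measure \<mu> (D i))"
    using I unfolding J_def by (intro measure_finite_Union) (auto intro: disjoint_family_on_mono)
  ultimately show ?thesis
    unfolding J_def by simp
qed

lemma potential_integrand_le:
  fixes z :: "nat \<Rightarrow> 'a"
  assumes I: "finite I" "disjoint_family_on D I" "\<And>i. i \<in> I \<Longrightarrow> D i \<in> sets \<mu>"
      "\<And>i. i \<in> I \<Longrightarrow> D i \<subseteq> K" "\<And>i. i \<in> I \<Longrightarrow> emeasure \<mu> (D i) \<noteq> \<infinity>"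
    and \<rho>: "\<rho> > 0" "\<And>i p. i \<in> I \<Longrightarrow> p \<in> D i \<Longrightarrow> dist p (z i) < \<rho>"
    and y: "\<And>i. i \<in> I \<Longrightarrow> \<rho> \<le> dist y (z i)" and R: "4 * R < \<epsilon>\<^sub>0"
  shows "(\<Sum>i\<in>I. measure \<mu> (D i) * indicator {dist y (z i)..R} (x / 4)) / (x / 4) ^ (DIM('a) - 1)
    \<le> B * 4 ^ (DIM('a) - 1) * (h x / x ^ (DIM('a) - 1)) * indicator {0<..4 * R} x"
proof (cases "x \<in> {0<..4 * R}")
  case False
  then have "indicator {dist y (z i)..R} (x / 4) = (0::real)" if "i \<in> I" for i
    using \<rho>(1) y[OF that] by (auto simp: indicator_def)
  then show ?thesis
    using False by simp
next
  case True
  define n where "n = DIM('a)"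
  define r where "r = x / 4"
  have r: "0 < r" "4 * r < \<epsilon>\<^sub>0" "x = 4 * r"
    using True R unfolding r_def by auto
  have "(\<Sum>i\<in>I. measure \<mu> (D i) * indicator {dist y (z i)..R} r)
      \<le> (\<Sum>i\<in>I. if dist y (z i) \<le> r then measure \<mu> (D i) else 0)"
    by (intro sum_mono) (auto simp: indicator_def)
  also have "\<dots> = (\<Sum>i\<in>{i\<in>I. dist y (z i) \<le> r}. measure \<mu> (D i))"
    using I(1) by (simp add: sum.inter_filter)
  also have "\<dots> \<le> B * h (4 * r)"
    using mass_near_le[OF I \<rho>(2) y r(1,2)] .
  finally have "(\<Sum>i\<in>I. measure \<mu> (D i) * indicator {dist y (z i)..R} r) / r ^ (n - 1)
      \<le> B * h (4 * r) / r ^ (n - 1)"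
    using r(1) by (simp add: divide_right_mono)
  also have "\<dots> = B * 4 ^ (n - 1) * (h x / x ^ (n - 1))"
    unfolding r(3) by (simp add: power_mult_distrib)
  finally show ?thesis
    using True unfolding r_def n_def by simp
qed

text \<open>After the substitution \<open>r = x / 4\<close>, \<open>potential_integrand_le\<close> bounds the potential by
  the Dini integral.\<close>
lemma potential_bound:
  fixes z :: "nat \<Rightarrow> 'a"
  assumes I: "finite I" "disjoint_family_on D I" "\<And>i. i \<in> I \<Longrightarrow> D i \<in> sets \<mu>"
      "\<And>i. i \<in> I \<Longrightarrow> D i \<subseteq> K" "\<And>i. i \<in> I \<Longrightarrow> emeasure \<mu> (D i) \<noteq> \<infinity>"
    and \<rho>: "\<rho> > 0" "\<And>i p. i \<in> I \<Longrightarrow> p \<in> D i \<Longrightarrow> dist p (z i) < \<rho>"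
    and y: "\<And>i. i \<in> I \<Longrightarrow> \<rho> \<le> dist y (z i)" "\<And>i. i \<in> I \<Longrightarrow> dist y (z i) \<le> R"
    and R: "4 * R < \<epsilon>\<^sub>0"
  shows "ennreal (potential I (\<lambda>i. measure \<mu> (D i)) z R y)
    \<le> ennreal (B * 4 ^ (DIM('a) - 2)) * (\<integral>\<^sup>+ t\<in>{0<..4 * R}. ennreal (h t / t ^ (DIM('a) - 1)) \<partial>lborel)"
proof -
  define n where "n = DIM('a)"
  define m where "m i = measure \<mu> (D i)" for i
  define g where "g r = (\<Sum>i\<in>I. m i * indicator {dist y (z i)..R} r) / r ^ (n - 1)" for r
  have g_quarter: "ennreal (g (x / 4))
      \<le> ennreal (B * 4 ^ (n - 1)) * (ennreal (h x / x ^ (n - 1)) * indicator {0<..4 * R} x)" for x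
  proof -
    have "ennreal (g (x / 4)) \<le> ennreal (B * 4 ^ (n - 1) * (h x / x ^ (n - 1)) * indicator {0<..4 * R} x)"
      unfolding g_def m_def n_def by (intro ennreal_leI potential_integrand_le[OF I \<rho> y(1) R])
    also have "\<dots> = ennreal (B * 4 ^ (n - 1)) * (ennreal (h x / x ^ (n - 1)) * indicator {0<..4 * R} x)"
    proof -
      have "ennreal (a * b * indicator S x) = ennreal a * (ennreal b * indicator S x)"
        if "a \<ge> 0" for a b :: real and S
        using that by (cases "x \<in> S") (simp_all add: ennreal_mult')
      then show ?thesis
        using B_pos by (metis less_imp_le zero_le_numeral zero_le_power mult_nonneg_nonneg)
    qed
    finally show ?thesis .
  qed
  have "0 < dist y (z i)" if "i \<in> I" for i
    using \<rho>(1) y(1)[OF that] by linarith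
  then have "ennreal (potential I m z R y) = (\<integral>\<^sup>+ r. ennreal (g r) \<partial>lborel)"
    unfolding g_def n_def using y(2)
    by (intro nn_integral_potential[OF dim I(1)]) (simp_all add: m_def)
  also have "\<dots> = ennreal (1 / 4) * (\<integral>\<^sup>+ x. ennreal (g (x / 4)) \<partial>lborel)"
  proof -
    have "(\<lambda>r. ennreal (g r)) \<in> borel_measurable borel"
      unfolding g_def by measurable
    from nn_integral_real_affine[OF this, of "1 / 4" 0] show ?thesis by simp
  qed
  also have "\<dots> \<le> ennreal (1 / 4) * (\<integral>\<^sup>+ x. ennreal (B * 4 ^ (n - 1))
      * (ennreal (h x / x ^ (n - 1)) * indicator {0<..4 * R} x) \<partial>lborel)"
    by (intro mult_left_mono nn_integral_mono g_quarter) simp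
  also have "\<dots> \<le> ennreal (1 / 4) * (ennreal (B * 4 ^ (n - 1))
      * (\<integral>\<^sup>+ x\<in>{0<..4 * R}. ennreal (h x / x ^ (n - 1)) \<partial>lborel))"
    using B_pos by (intro mult_left_mono nn_integral_cmult_le) auto
  also have "\<dots> = ennreal (B * 4 ^ (n - 2)) * (\<integral>\<^sup>+ x\<in>{0<..4 * R}. ennreal (h x / x ^ (n - 1)) \<partial>lborel)"
  proof -
    have "n - 1 = Suc (n - 2)" using dim by (simp add: n_def)
    then have "1 / 4 * (B * 4 ^ (n - 1)) = B * 4 ^ (n - 2)" by simp
    then show ?thesis
      using B_pos by (simp add: mult.assoc[symmetric] ennreal_mult[symmetric])
  qed
  finally show ?thesis
    unfolding n_def m_def .
qed

lemma potential_le_potential_const: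
  fixes z :: "nat \<Rightarrow> 'a"
  assumes s: "admissible_scale s"
    and I: "finite I" "disjoint_family_on D I" "\<And>i. i \<in> I \<Longrightarrow> D i \<in> sets \<mu>"
      "\<And>i. i \<in> I \<Longrightarrow> D i \<subseteq> K" "\<And>i. i \<in> I \<Longrightarrow> emeasure \<mu> (D i) \<noteq> \<infinity>"
    and \<rho>: "\<rho> > 0" "\<And>i p. i \<in> I \<Longrightarrow> p \<in> D i \<Longrightarrow> dist p (z i) < \<rho>"
    and z: "\<And>i. i \<in> I \<Longrightarrow> dist x0 (z i) < s"
    and y: "y \<in> cball x0 (3 * s)" "\<And>i. i \<in> I \<Longrightarrow> \<rho> \<le> dist y (z i)"
  shows "potential I (\<lambda>i. measure \<mu> (D i)) z (4 * s) y \<le> potential_const * h s / s ^ (DIM('a) - 2)"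
proof -
  define n where "n = DIM('a)"
  define t where "t = 16 * s / c"
  have s': "0 < s" "2 * c * s < \<epsilon>\<^sub>0" "16 * s < \<epsilon>\<^sub>0" "2 * s < s1" "t < s1"
    using s unfolding admissible_scale_def t_def by auto
  have t: "0 < t" "c * t = 4 * (4 * s)"
    using s'(1) c_gt_4 unfolding t_def by auto
  have "dist y (z i) \<le> 4 * s" if "i \<in> I" for i
    using dist_triangle[of y "z i" x0] y(1) z[OF that] by (simp add: dist_commute)
  then have "ennreal (potential I (\<lambda>i. measure \<mu> (D i)) z (4 * s) y)
      \<le> ennreal (B * 4 ^ (n - 2)) * (\<integral>\<^sup>+ r\<in>{0<..c * t}. ennreal (h r / r ^ (n - 1)) \<partial>lborel)"
    unfolding t(2) n_def using s'(3) by (intro potential_bound[OF I \<rho> y(2)]) auto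
  also have "\<dots> \<le> ennreal (B * 4 ^ (n - 2)) * ennreal (M * h t / t ^ (n - 2))"
    using dini[OF t(1) s'(5)] unfolding n_def by (intro mult_left_mono) auto
  also have "\<dots> = ennreal (B * 4 ^ (n - 2) * (M * h t / t ^ (n - 2)))"
    by (rule ennreal_mult'[symmetric]) (use B_pos in simp)
  finally have "potential I (\<lambda>i. measure \<mu> (D i)) z (4 * s) y \<le> B * 4 ^ (n - 2) * (M * h t / t ^ (n - 2))"
    using B_pos M_pos h_pos[OF t(1)] t(1) by (simp add: ennreal_le_iff)
  also have "\<dots> \<le> B * 4 ^ (n - 2) * (M * (((B / A) * doubling_const)^2 * h s) / t ^ (n - 2))"
    using h_small_scale_le[of s] s' B_pos M_pos t(1) unfolding t_def
    by (intro mult_left_mono divide_right_mono) auto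
  also have "\<dots> = potential_const * h s / s ^ (n - 2)"
  proof -
    have t_power: "t ^ (n - 2) = 16 ^ (n - 2) * s ^ (n - 2) / c ^ (n - 2)"
      unfolding t_def by (simp add: power_divide power_mult_distrib)
    show ?thesis
      unfolding t_power unfolding potential_const_def n_def using c_gt_4 s'(1)
      by (simp add: power_divide field_simps)
  qed
  finally show ?thesis
    unfolding n_def .
qed

lemma potential_gap_at_centre:
  fixes z :: "nat \<Rightarrow> 'a"
  assumes s: "0 < s" and m: "\<And>i. i \<in> I \<Longrightarrow> m i \<ge> 0" and mass: "A * h s / 2 \<le> (\<Sum>i\<in>I. m i)"
    and z: "\<And>i. i \<in> I \<Longrightarrow> 0 < dist x0 (z i)" "\<And>i. i \<in> I \<Longrightarrow> dist x0 (z i) \<le> s"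
  shows "decrease_rate \<le> (potential I m z R x0 - (\<Sum>i\<in>I. m i) * newtonian_kernel DIM('a) R (2 * s))
    / (potential_const * h s / s ^ (DIM('a) - 2))"
proof -
  define n where "n = DIM('a)"
  have "n - 1 = Suc (n - 2)" "n = Suc (n - 1)"
    using dim unfolding n_def by simp_all
  then have "(2 * s) ^ (n - 1) = 2 ^ (n - 1) * (s * s ^ (n - 2))" "(2::real) ^ n = 2 * 2 ^ (n - 1)"
    by (metis power_Suc power_mult_distrib)+
  then have "decrease_rate * (potential_const * h s / s ^ (n - 2)) = (A * h s / 2) * (s / (2 * s) ^ (n - 1))"
    unfolding decrease_rate_def n_def[symmetric] using potential_const_pos s by (simp add: field_simps)
  also have "\<dots> \<le> (\<Sum>i\<in>I. m i) * (s / (2 * s) ^ (n - 1))"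
    using mass s by (intro mult_right_mono) auto
  also have "\<dots> \<le> potential I m z R x0 - (\<Sum>i\<in>I. m i) * newtonian_kernel n R (2 * s)"
    using potential_gap_ge[OF dim s m z] unfolding n_def .
  finally have "decrease_rate * (potential_const * h s / s ^ (n - 2))
      \<le> potential I m z R x0 - (\<Sum>i\<in>I. m i) * newtonian_kernel n R (2 * s)" .
  moreover have "potential_const * h s / s ^ (n - 2) > 0"
    using potential_const_pos h_pos[OF s] s by simp
  ultimately show ?thesis
    unfolding n_def by (metis pos_le_divide_eq)
qed


lemma exists_inner_subset:
  assumes x0: "x0 \<in> K" and s: "0 < s" "s < \<epsilon>\<^sub>0"
    and U: "open U" "(K - N) \<inter> ball x0 s \<subseteq> U"
  obtains \<rho> C where "\<rho> > 0" "C \<in> sets borel" "C \<subseteq> K \<inter> ball x0 s" "C \<subseteq> inner_margin \<rho> U"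
    "emeasure \<mu> C \<noteq> \<infinity>" "A * h s / 2 \<le> measure \<mu> C"
proof -
  define E where "E = (K \<inter> ball x0 s) - N"
  have "N \<in> sets borel"
    using N_null sets_\<mu> sets_restrict_space_iff[of \<Omega> borel N] open_\<Omega> by (auto dest: null_setsD2)
  then have E: "E \<in> sets borel" "E \<subseteq> \<Omega>" "E \<subseteq> U"
    unfolding E_def using K_borel K_sub U(2) by auto
  have "emeasure \<mu> E = emeasure \<mu> (K \<inter> ball x0 s)"
    unfolding E_def by (rule emeasure_Diff_null_set[OF N_null K_inter_ball_in_sets])
  then have E_lower: "ennreal (A * h s) \<le> emeasure \<mu> E" and E_fin: "emeasure \<mu> E < \<infinity>"
    using growth_lower[OF x0 s] growth_upper[OF x0 s] by (auto simp: le_less_trans)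
  have "0 < ennreal (A * h s)"
    using A_pos h_pos[OF s(1)] by simp
  from this E_lower have E_pos: "0 < emeasure \<mu> E"
    by (rule order.strict_trans2)
  have inner_sets: "E \<inter> inner_margin \<rho> U \<in> sets \<mu>" for \<rho>
    using E open_inner_margin[of \<rho> U] by (intro sets_\<mu>I) auto
  obtain \<rho> where \<rho>: "\<rho> > 0" "emeasure \<mu> E / 2 < emeasure \<mu> (E \<inter> inner_margin \<rho> U)"
    using emeasure_inner_margin_approx[OF sets_\<mu>I[OF E(1,2)] E(3) U(1) inner_sets E_pos E_fin] .
  define C where "C = E \<inter> inner_margin \<rho> U"
  have C_fin: "emeasure \<mu> C \<noteq> \<infinity>"
    using emeasure_mono[of C E \<mu>] sets_\<mu>I[OF E(1,2)] E_fin unfolding C_def by (auto simp: top_unique)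
  have "ennreal (A * h s / 2) = ennreal (A * h s) / 2"
    using A_pos h_pos[OF s(1)] by (intro ennreal_divide_numeral[symmetric]) simp
  also have "\<dots> < emeasure \<mu> C"
    using divide_right_mono_ennreal[OF E_lower, of 2] \<rho>(2) unfolding C_def by simp
  also have "\<dots> = ennreal (measure \<mu> C)"
    using C_fin by (simp add: emeasure_eq_ennreal_measure)
  finally have less: "ennreal (A * h s / 2) < ennreal (measure \<mu> C)" .
  have "A * h s / 2 \<le> measure \<mu> C"
  proof (rule ccontr)
    assume "\<not> A * h s / 2 \<le> measure \<mu> C"
    then have "ennreal (measure \<mu> C) \<le> ennreal (A * h s / 2)"
      by (intro ennreal_leI) simp
    with less show False by simp
  qed
  moreover have "C \<in> sets borel"
    unfolding C_def using E(1) borel_open[OF open_inner_margin] by (rule sets.Int)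
  ultimately show ?thesis
    using that[OF \<rho>(1)] C_fin unfolding C_def E_def by auto
qed

lemma exists_pieces:
  assumes x0: "x0 \<in> K" and s: "0 < s" "s < \<epsilon>\<^sub>0"
    and U: "open U" "(K - N) \<inter> ball x0 s \<subseteq> U"
  obtains \<rho> and I :: "nat set" and D :: "nat \<Rightarrow> 'a set" and z :: "nat \<Rightarrow> 'a"
  where "\<rho> > 0" "finite I" "disjoint_family_on D I" "\<And>i. i \<in> I \<Longrightarrow> D i \<in> sets \<mu>"
    "\<And>i. i \<in> I \<Longrightarrow> D i \<subseteq> K" "\<And>i. i \<in> I \<Longrightarrow> emeasure \<mu> (D i) \<noteq> \<infinity>"
    "\<And>i p. i \<in> I \<Longrightarrow> p \<in> D i \<Longrightarrow> dist p (z i) < \<rho>"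
    "\<And>i. i \<in> I \<Longrightarrow> cball (z i) \<rho> \<subseteq> U" "\<And>i. i \<in> I \<Longrightarrow> dist x0 (z i) < s"
    "A * h s / 2 \<le> (\<Sum>i\<in>I. measure \<mu> (D i))"
proof -
  obtain \<rho> C where \<rho>: "\<rho> > 0" and C: "C \<in> sets borel" "C \<subseteq> K \<inter> ball x0 s"
      "C \<subseteq> inner_margin \<rho> U" "emeasure \<mu> C \<noteq> \<infinity>" "A * h s / 2 \<le> measure \<mu> C"
    using exists_inner_subset[OF x0 s U] .
  have "C \<subseteq> ball x0 s"
    using C(2) by blast
  then have "bounded C"
    by (rule bounded_subset[OF bounded_ball])
  then obtain I :: "nat set" and D z where I: "finite I" "disjoint_family_on D I" "\<And>i. i \<in> I \<Longrightarrow> D i \<in> sets borel"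
      "(\<Union>i\<in>I. D i) = C" "\<And>i. i \<in> I \<Longrightarrow> z i \<in> D i"
      "\<And>i p. i \<in> I \<Longrightarrow> p \<in> D i \<Longrightarrow> dist p (z i) < 2 * (\<rho> / 2)"
    using bounded_borel_small_partition[OF _ C(1) half_gt_zero[OF \<rho>]] by blast
  have D_sub: "D i \<subseteq> C" if "i \<in> I" for i
    using I(4) that by auto
  have D_sets: "D i \<in> sets \<mu>" if "i \<in> I" for i
    using D_sub[OF that] C(2) K_sub I(3)[OF that] by (intro sets_\<mu>I) auto
  have D_fin: "emeasure \<mu> (D i) \<noteq> \<infinity>" if "i \<in> I" for i
    using emeasure_mono[OF D_sub[OF that], of \<mu>] C(1,2,4) K_sub sets_\<mu>I[of C]
    by (auto simp: top_unique)
  have measure_C: "measure \<mu> C = (\<Sum>i\<in>I. measure \<mu> (D i))"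
    unfolding I(4)[symmetric] using I(1,2) D_sets D_fin by (intro measure_finite_Union) auto
  have z_C: "z i \<in> C" if "i \<in> I" for i
    using D_sub I(5) that by blast
  show ?thesis
  proof (intro that[OF \<rho> I(1,2) D_sets _ D_fin])
    show "D i \<subseteq> K" if "i \<in> I" for i
      using D_sub[OF that] C(2) by blast
    show "dist p (z i) < \<rho>" if "i \<in> I" "p \<in> D i" for i p
      using I(6)[OF that] by simp
    show "cball (z i) \<rho> \<subseteq> U" if "i \<in> I" for i
      using cball_subset_of_inner_margin z_C[OF that] C(3) by blast
    show "dist x0 (z i) < s" if "i \<in> I" for i
      using z_C[OF that] C(2) by auto
    show "A * h s / 2 \<le> (\<Sum>i\<in>I. measure \<mu> (D i))"
      using C(5) measure_C by simp
  qed
qed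

lemma subharmonic_decrease_at_scale:
  fixes v :: "'a \<Rightarrow> ereal"
  assumes v: "subharmonic_on \<Omega> v" and x0: "x0 \<in> K" and r: "admissible_scale (r / 3)"
    and r_sub: "cball x0 r \<subseteq> \<Omega>" and v_L: "\<forall>y\<in>cball x0 r. v y < ereal L"
    and v_a: "\<forall>y\<in>(K - N) \<inter> ball x0 r. v y < ereal a" and a: "ereal a < v x0"
  shows "v x0 \<le> ereal (L - (L - a) * decrease_rate)"
proof -
  define s where "s = r / 3"
  have s: "admissible_scale s" "0 < s" "s < \<epsilon>\<^sub>0" "r = 3 * s"
    using r unfolding admissible_scale_def s_def by auto
  have "v x0 < ereal L"
    using v_L s by simp
  with a have "ereal a < ereal L"
    by (rule less_trans)
  then have "a \<le> L" by simp
  define U where "U = {y\<in>\<Omega>. v y < ereal a}"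
  have "usc_on \<Omega> v"
    using v unfolding subharmonic_on_def by blast
  then have U: "open U"
    unfolding U_def by (rule usc_on_open_sublevel[OF open_\<Omega>])
  have x0_U: "x0 \<notin> U"
    using a unfolding U_def by auto
  have "(K - N) \<inter> ball x0 s \<subseteq> U"
    using v_a K_sub s(2,4) unfolding U_def by auto
  obtain \<rho> and I :: "nat set" and D z where \<rho>: "\<rho> > 0" and I: "finite I" "disjoint_family_on D I"
      "\<And>i. i \<in> I \<Longrightarrow> D i \<in> sets \<mu>" "\<And>i. i \<in> I \<Longrightarrow> D i \<subseteq> K" "\<And>i. i \<in> I \<Longrightarrow> emeasure \<mu> (D i) \<noteq> \<infinity>"
    and D_small: "\<And>i p. i \<in> I \<Longrightarrow> p \<in> D i \<Longrightarrow> dist p (z i) < \<rho>"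
    and z: "\<And>i. i \<in> I \<Longrightarrow> cball (z i) \<rho> \<subseteq> U" "\<And>i. i \<in> I \<Longrightarrow> dist x0 (z i) < s"
    and mass: "A * h s / 2 \<le> (\<Sum>i\<in>I. measure \<mu> (D i))"
    by (rule exists_pieces[OF x0 s(2,3) U \<open>(K - N) \<inter> ball x0 s \<subseteq> U\<close>]) blast
  have far: "\<rho> < dist x0 (z i)" if "i \<in> I" for i
  proof -
    have "x0 \<notin> cball (z i) \<rho>"
      using z(1)[OF that] x0_U by blast
    then show ?thesis by (simp add: dist_commute)
  qed
  define m where "m i = measure \<mu> (D i)" for i
  define \<beta> where "\<beta> = (\<Sum>i\<in>I. m i) * newtonian_kernel DIM('a) (4 * s) (2 * s)"
  define T where "T = potential_const * h s / s ^ (DIM('a) - 2)"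
  have T: "T > 0"
    unfolding T_def using potential_const_pos h_pos s(2) by simp
  have "v x0 \<le> ereal (L - (L - a) * ((potential I m z (4 * s) x0 - \<beta>) / T))"
  proof (rule subharmonic_le_barrier[OF v _ r_sub I(1) \<rho> far harmonic_on_potential[OF dim I(1)] T \<open>a \<le> L\<close> v_L])
    show "0 < r" using s by simp
    show "v y < ereal a" if "i \<in> I" "y \<in> cball (z i) \<rho>" for i y
      using z(1) that unfolding U_def by blast
    show "potential I m z (4 * s) y \<le> \<beta>" if "dist x0 y = r" for y
      unfolding \<beta>_def
    proof (rule potential_le_of_dist_ge[OF dim])
      show "2 * s \<le> dist y (z i)" if "i \<in> I" for i
        using dist_triangle[of x0 y "z i"] z(2)[OF that] \<open>dist x0 y = r\<close> s(4) by (simp add: dist_commute)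
    qed (use s(2) in \<open>simp_all add: m_def\<close>)
    have "0 \<le> \<beta>"
      unfolding \<beta>_def m_def using dim s(2) by (intro mult_nonneg_nonneg sum_nonneg newtonian_kernel_nonneg) auto
    moreover have "potential I m z (4 * s) y \<le> T"
      if "y \<in> cball x0 r" "\<forall>i\<in>I. \<rho> \<le> dist y (z i)" for y
      unfolding m_def[abs_def] T_def using that s(4)
      by (intro potential_le_potential_const[OF s(1) I \<rho> D_small z(2)]) auto
    ultimately show "potential I m z (4 * s) y \<le> \<beta> + T"
      if "y \<in> cball x0 r" "\<forall>i\<in>I. \<rho> \<le> dist y (z i)" for y
      using that by fastforce
  qed
  also have "L - (L - a) * ((potential I m z (4 * s) x0 - \<beta>) / T) \<le> L - (L - a) * decrease_rate"
  proof -
    have "0 < dist x0 (z i)" if "i \<in> I" for i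
      using \<rho> far[OF that] by linarith
    then have "decrease_rate \<le> (potential I m z (4 * s) x0 - \<beta>) / T"
      unfolding T_def \<beta>_def m_def using s(2) mass z(2)
      by (intro potential_gap_at_centre) (simp_all add: less_imp_le)
    then have "(L - a) * decrease_rate \<le> (L - a) * ((potential I m z (4 * s) x0 - \<beta>) / T)"
      using \<open>a \<le> L\<close> by (intro mult_left_mono) simp_all
    then show ?thesis
      by linarith
  qed
  finally show ?thesis by simp
qed

lemma eventually_subharmonic_decrease:
  fixes v :: "'a \<Rightarrow> ereal"
  assumes v: "subharmonic_on \<Omega> v" and x0: "x0 \<in> K"
  shows "\<forall>\<^sub>F r in at_right 0. \<forall>L a. cball x0 r \<subseteq> \<Omega> \<longrightarrow> (\<forall>y\<in>cball x0 r. v y < ereal L)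
    \<longrightarrow> (\<forall>y\<in>(K - N) \<inter> ball x0 r. v y < ereal a) \<longrightarrow> ereal a < v x0
    \<longrightarrow> v x0 \<le> ereal (L - (L - a) * decrease_rate)"
proof -
  have "((\<lambda>r. r / 3) \<longlongrightarrow> 0) (at_right (0::real))"
    by (auto intro!: tendsto_eq_intros)
  then have "\<forall>\<^sub>F r in at_right 0. 2 * c * (r / 3) < \<epsilon>\<^sub>0 \<and> 16 * (r / 3) < \<epsilon>\<^sub>0
      \<and> 2 * (r / 3) < s1 \<and> 16 * (r / 3) / c < s1"
    using \<epsilon>\<^sub>0_pos s1_pos c_gt_4 by (intro eventually_conj order_tendstoD(2)) (auto intro!: tendsto_eq_intros)
  moreover have "\<forall>\<^sub>F r in at_right 0. 0 < r / (3::real)"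
    using eventually_at_right_less[of "0::real"] by (rule eventually_mono) simp
  ultimately have "\<forall>\<^sub>F r in at_right 0. admissible_scale (r / 3)"
    unfolding admissible_scale_def by eventually_elim auto
  then show ?thesis
    by eventually_elim (use subharmonic_decrease_at_scale[OF v x0] in blast)
qed

end


theorem theorem2:
  fixes \<Omega> K N :: "'a::euclidean_space set"
    and u v :: "'a \<Rightarrow> ereal"
    and h :: "real \<Rightarrow> real"
    and \<mu> :: "'a measure"
  assumes dim: "DIM('a) \<ge> 2"
    and domain: "open \<Omega>" "connected \<Omega>" "\<Omega> \<noteq> {}"
    and u_usc: "usc_on \<Omega> u"
    and v_sh: "subharmonic_on \<Omega> v"
    and K_borel: "K \<in> sets borel" and K_sub: "K \<subseteq> \<Omega>"
    and h_pos: "\<forall>r>0. h r > 0"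
    and h_cond: "\<exists>M>0. \<exists>c>4. \<forall>\<^sub>F \<epsilon> in at_right 0.
        (\<integral>\<^sup>+ r\<in>{0<..c * \<epsilon>}. ennreal (h r / r ^ (DIM('a) - 1)) \<partial>lborel)
          \<le> ennreal (M * h \<epsilon> / \<epsilon> ^ (DIM('a) - 2))"
    and mu_borel: "sets \<mu> = sets (restrict_space borel \<Omega>)"
    and A_pos: "A > 0" and B_pos: "B > 0" and eps0_pos: "\<epsilon>\<^sub>0 > 0"
    and N_sub: "N \<subseteq> K"
    and N_null: "N \<in> null_sets \<mu>"
    and growth: "\<forall>x\<in>K. \<forall>\<epsilon>. 0 < \<epsilon> \<and> \<epsilon> < \<epsilon>\<^sub>0 \<longrightarrow>
        ennreal (A * h \<epsilon>) \<le> emeasure \<mu> (K \<inter> ball x \<epsilon>) \<and>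
        emeasure \<mu> (K \<inter> ball x \<epsilon>) \<le> ennreal (B * h \<epsilon>)"
    and uv: "\<forall>x\<in>K - N. v x \<le> u x"
  shows "\<forall>x\<in>K. v x \<le> u x"
proof
  fix x0 assume x0: "x0 \<in> K"
  obtain M c where M: "M > 0" and c: "c > 4" and dini_eventually: "\<forall>\<^sub>F \<epsilon> in at_right 0.
      (\<integral>\<^sup>+ r\<in>{0<..c * \<epsilon>}. ennreal (h r / r ^ (DIM('a) - 1)) \<partial>lborel)
        \<le> ennreal (M * h \<epsilon> / \<epsilon> ^ (DIM('a) - 2))"
    using h_cond by blast
  then obtain s1 where "s1 > 0" and "\<And>\<epsilon>. 0 < \<epsilon> \<Longrightarrow> \<epsilon> < s1 \<Longrightarrow>
      (\<integral>\<^sup>+ r\<in>{0<..c * \<epsilon>}. ennreal (h r / r ^ (DIM('a) - 1)) \<partial>lborel)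
        \<le> ennreal (M * h \<epsilon> / \<epsilon> ^ (DIM('a) - 2))"
    unfolding eventually_at_right_field by auto
  then interpret h_regular_measure \<Omega> K N h \<mu> A B \<epsilon>\<^sub>0 M c s1
    using assms M c x0 by unfold_locales auto
  have "x0 \<in> \<Omega>" "v x0 \<noteq> \<infinity>" "usc_on \<Omega> v"
    using x0 K_sub v_sh unfolding subharmonic_on_def by auto
  then show "v x0 \<le> u x0"
    using le_at_point_of_uniform_decrease[OF domain(1) u_usc _ _ _ uv decrease_rate_pos
        eventually_subharmonic_decrease[OF v_sh x0]]
    by blast
qed

end
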